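(* Let $x,y>0$, let $\theta\in(0,\frac{\pi}{2})$, and let $\mathbf z=(xy\cos\theta,x^2,y^2)$. For $\theta\in(0,\arccos\frac{2}{\pi})$ let $\beta_0\in(1,\infty)$ be the unique solution of $$\arccos\left(\frac{-1}{\beta_0}\right)=\frac{(\beta_0-\cos\theta)\sqrt{\beta_0^2-1}}{\beta_0(\beta_0\cos\theta-1)}.$$ Let $\Lambda^*_+$ be as defined in the context. Then the following hold. - If $\theta\in(0,\arccos\frac{2}{\pi})$, then $\Lambda^*_+(\mathbf z)=\frac{x^2}{2}+\frac{y^2}{2}-1-\ln(xy)+\ln\left(\frac{\pi\beta_0(\beta_0\cos\theta-1)}{2(\beta_0-\cos\theta)^2}\right)$. - If $\theta\in[\arccos\frac{2}{\pi},\frac{\pi}{2})$, then $\Lambda^*_+(\mathbf z)=\frac{x^2}{2}+\frac{y^2}{2}-1-\ln(xy)$.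
   Context: For $\boldsymbol\lambda=(\lambda_1,\lambda_2,\lambda_3)\in\mathbb{R}^3$ let $D=\lambda_1^2-(1-2\lambda_2)(1-2\lambda_3)$, and let $$S=\{\boldsymbol\lambda:\lambda_2<\tfrac12,\ \lambda_3<\tfrac12,\ D<0\}.$$ For $\boldsymbol\lambda\in S$ put $$\Lambda(\boldsymbol\lambda)=\ln\left(\pi+2\arctan\left(\frac{\lambda_1}{\sqrt{-D}}\right)\right)-\ln\pi-\tfrac12\ln(-D).$$ This is the log moment generating function of $(\hat X\hat Y,\hat X^2,\hat Y^2)$ for independent half-normal $\hat X,\hat Y$. Define $$\Lambda^*_+(\mathbf z)=\sup_{\boldsymbol\lambda\in S,\ \lambda_1>0}\{\langle\boldsymbol\lambda,\mathbf z\rangle-\Lambda(\boldsymbol\lambda)\}.$$ *)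

theory Defs
  imports "HOL-Analysis.Analysis"
begin

definition Dlam :: "real \<Rightarrow> real \<Rightarrow> real \<Rightarrow> real" where
  "Dlam l1 l2 l3 = l1^2 - (1 - 2*l2) * (1 - 2*l3)"

definition S_dom :: "(real \<times> real \<times> real) set" where
  "S_dom = {(l1, l2, l3). l2 < 1/2 \<and> l3 < 1/2 \<and> Dlam l1 l2 l3 < 0}"

definition Lambda :: "real \<Rightarrow> real \<Rightarrow> real \<Rightarrow> real" where
  "Lambda l1 l2 l3 =
     ln (pi + 2 * arctan (l1 / sqrt (- Dlam l1 l2 l3))) - ln pi - (1/2) * ln (- Dlam l1 l2 l3)"

definition Lambda_star_plus :: "real \<times> real \<times> real \<Rightarrow> real" where
  "Lambda_star_plus z =
     (SUP l \<in> {l \<in> S_dom. fst l > 0}.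
        fst l * fst z + fst (snd l) * fst (snd z) + snd (snd l) * snd (snd z)
        - Lambda (fst l) (fst (snd l)) (snd (snd l)))"

end

theory Submission
  imports Defs
begin

text \<open>
  Put \<open>c = cos \<theta>\<close>. For \<open>\<lambda> \<in> S\<close> with \<open>\<lambda>\<^sub>1 > 0\<close> write \<open>(1 - 2\<lambda>\<^sub>2)(1 - 2\<lambda>\<^sub>3) = p\<^sup>2\<close>,
  \<open>\<lambda>\<^sub>1 = p sin t\<close> and \<open>\<surd>(-D) = p cos t\<close> with \<open>t \<in> (0, \<pi>/2)\<close>. Then AM-GM in \<open>(x, y)\<close> and
  \<open>ln u \<le> u - 1\<close> in \<open>p\<close> bound \<open>\<langle>\<lambda>, z\<rangle> - \<Lambda>(\<lambda>)\<close> by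
  \<open>x\<^sup>2/2 + y\<^sup>2/2 - 1 - ln (xy) + profile c t\<close>, with equality for a suitable \<open>\<lambda>\<close>, so
  \<open>\<Lambda>\<^sup>*\<^sub>+(z)\<close> is that constant plus the supremum of \<open>profile c\<close> over \<open>(0, \<pi>/2)\<close>.

  The derivative of \<open>profile c\<close> has the sign of \<open>profile_numer c\<close>, whose own derivative is
  \<open>cos t (4c cos t - \<pi> - 2t)\<close> with a decreasing second factor, and \<open>profile_numer c 0 = c\<pi> - 2\<close>.
  Hence for \<open>c \<le> 2/\<pi>\<close> the numerator is negative and \<open>profile c\<close> decreases from
  \<open>profile c 0 = 0\<close>; for \<open>c > 2/\<pi>\<close> the numerator has a single zero \<open>r\<close>, where \<open>profile c\<close> is
  maximal, and \<open>\<beta>\<^sub>0 = 1 / sin r\<close>.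
\<close>

section \<open>The profile and its critical point\<close>

definition profile :: "real \<Rightarrow> real \<Rightarrow> real" where
  "profile c t = ln pi + ln (cos t) - ln (pi + 2*t) - ln (1 - c * sin t)"

definition profile_numer :: "real \<Rightarrow> real \<Rightarrow> real" where
  "profile_numer c t = (c - sin t) * (pi + 2*t) - 2 * cos t * (1 - c * sin t)"

lemma two_div_pi_bounds: "0 < 2/pi" "2/pi < 1"
  using pi_gt3 by simp_all

lemma one_minus_mult_sin_pos:
  fixes c t :: real
  assumes "c < 1" "0 \<le> t" "t \<le> pi"
  shows "0 < 1 - c * sin t"
proof (cases "c \<le> 0")
  case True
  then show ?thesis using mult_nonpos_nonneg[OF True sin_ge_zero[OF assms(2,3)]] by linarith
next
  case False
  then have "c * sin t \<le> c" using mult_left_le[OF sin_le_one, of c] by simp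
  then show ?thesis using assms by linarith
qed

lemma profile_terms_pos:
  assumes "c < 1" "0 \<le> t" "t < pi/2"
  shows "0 < pi + 2*t" "0 < cos t" "0 < 1 - c * sin t"
proof -
  show "0 < pi + 2*t" using assms pi_gt_zero by linarith
  show "0 < cos t" using assms by (intro cos_gt_zero_pi) auto
  show "0 < 1 - c * sin t" using assms by (intro one_minus_mult_sin_pos) auto
qed

lemma profile_has_derivative:
  assumes "c < 1" "0 \<le> t" "t < pi/2"
  shows "DERIV (profile c) t :> profile_numer c t / ((pi + 2*t) * cos t * (1 - c * sin t))"
proof -
  note pos = profile_terms_pos[OF assms]
  have "DERIV (profile c) t :> - sin t / cos t - 2 / (pi + 2*t) + c * cos t / (1 - c * sin t)"
    unfolding profile_def[abs_def] using pos by (auto intro!: derivative_eq_intros)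
  moreover have "- sin t / cos t - 2 / (pi + 2*t) + c * cos t / (1 - c * sin t)
      = profile_numer c t / ((pi + 2*t) * cos t * (1 - c * sin t))"
    using pos unfolding profile_numer_def
    by (simp add: divide_simps) (use sin_cos_squared_add3[of t] in algebra)
  ultimately show ?thesis by simp
qed

lemma profile_eq_ln:
  assumes "c < 1" "0 \<le> t" "t < pi/2"
  shows "profile c t = ln (pi * cos t / ((pi + 2*t) * (1 - c * sin t)))"
  using profile_terms_pos[OF assms] by (simp add: profile_def ln_div ln_mult)

lemma profile_mono:
  assumes "c < 1" "0 \<le> a" "a \<le> b" "b < pi/2"
    and "\<And>t. a \<le> t \<Longrightarrow> t \<le> b \<Longrightarrow> 0 \<le> profile_numer c t"
  shows "profile c a \<le> profile c b"
proof (rule DERIV_nonneg_imp_nondecreasing[OF assms(3)])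
  fix t assume t: "a \<le> t" "t \<le> b"
  have "0 < (pi + 2*t) * cos t * (1 - c * sin t)"
    using profile_terms_pos[of c t] t assms by simp
  then show "\<exists>y. DERIV (profile c) t :> y \<and> 0 \<le> y"
    using profile_has_derivative[of c t] assms t by auto
qed

lemma profile_antimono:
  assumes "c < 1" "0 \<le> a" "a \<le> b" "b < pi/2"
    and "\<And>t. a \<le> t \<Longrightarrow> t \<le> b \<Longrightarrow> profile_numer c t \<le> 0"
  shows "profile c b \<le> profile c a"
proof (rule DERIV_nonpos_imp_nonincreasing[OF assms(3)])
  fix t assume t: "a \<le> t" "t \<le> b"
  have "0 < (pi + 2*t) * cos t * (1 - c * sin t)"
    using profile_terms_pos[of c t] t assms by simp
  then show "\<exists>y. DERIV (profile c) t :> y \<and> y \<le> 0"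
    using profile_has_derivative[of c t] assms t by (auto simp: divide_nonpos_pos)
qed

lemma profile_numer_has_derivative:
  "DERIV (profile_numer c) t :> cos t * (4*c * cos t - pi - 2*t)"
proof -
  have "DERIV (profile_numer c) t :>
      - cos t * (pi + 2*t) + 2 * (c - sin t) + 2 * sin t * (1 - c * sin t) + 2 * c * cos t * cos t"
    unfolding profile_numer_def[abs_def] by (auto intro!: derivative_eq_intros)
  moreover have "- cos t * (pi + 2*t) + 2 * (c - sin t) + 2 * sin t * (1 - c * sin t) + 2 * c * cos t * cos t
      = cos t * (4*c * cos t - pi - 2*t)"
    using sin_cos_squared_add3[of t] by algebra
  ultimately show ?thesis by simp
qed

lemma slope_factor_antimono:
  fixes c s t :: real
  assumes "0 \<le> c" "0 \<le> s" "s \<le> t" "t \<le> pi"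
  shows "4*c * cos t - 2*t \<le> 4*c * cos s - 2 * s"
  using mult_left_mono[OF cos_monotone_0_pi_le[OF assms(2-4)], of "4*c"] assms by linarith

lemma profile_numer_mono:
  assumes "0 \<le> c" "0 \<le> a" "a \<le> b" "b \<le> pi/2" "pi + 2*b \<le> 4*c * cos b"
  shows "profile_numer c a \<le> profile_numer c b"
proof (rule DERIV_nonneg_imp_nondecreasing[OF assms(3)])
  fix x assume x: "a \<le> x" "x \<le> b"
  have "0 \<le> cos x" using x assms by (intro cos_ge_zero) auto
  moreover have "0 \<le> 4*c * cos x - pi - 2*x"
    using slope_factor_antimono[of c x b] assms x by linarith
  ultimately show "\<exists>y. DERIV (profile_numer c) x :> y \<and> 0 \<le> y"
    using profile_numer_has_derivative by (blast intro: mult_nonneg_nonneg)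
qed

lemma profile_numer_strict_antimono:
  assumes "0 \<le> c" "0 \<le> a" "a < b" "b < pi/2" "4*c * cos a < pi + 2*a"
  shows "profile_numer c b < profile_numer c a"
proof (rule DERIV_neg_imp_decreasing[OF assms(3)])
  fix x assume x: "a \<le> x" "x \<le> b"
  have "0 < cos x" using x assms by (intro cos_gt_zero_pi) auto
  moreover have "4*c * cos x - pi - 2*x < 0"
    using slope_factor_antimono[of c a x] assms x by linarith
  ultimately show "\<exists>y. DERIV (profile_numer c) x :> y \<and> y < 0"
    using profile_numer_has_derivative by (blast intro: mult_pos_neg)
qed

lemma profile_numer_neg:
  assumes "0 \<le> c" "c \<le> 2/pi" "0 < t" "t < pi/2"
  shows "profile_numer c t < 0"
proof -
  have "4*c \<le> 8/pi" using assms by simp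
  also have "8/pi < pi"
    using mult_strict_mono[OF pi_gt3 pi_gt3] by (simp add: divide_less_eq)
  finally have "profile_numer c t < profile_numer c 0"
    using assms by (intro profile_numer_strict_antimono) auto
  moreover have "profile_numer c 0 \<le> 0"
    using assms by (simp add: profile_numer_def field_simps)
  ultimately show ?thesis by simp
qed

lemma profile_numer_sign_around_root:
  assumes "0 \<le> c" "0 < profile_numer c 0" "0 < r" "r < pi/2" "profile_numer c r = 0"
  shows profile_numer_pos_before_root: "0 \<le> t \<Longrightarrow> t < r \<Longrightarrow> 0 < profile_numer c t"
    and profile_numer_neg_after_root: "r < t \<Longrightarrow> t < pi/2 \<Longrightarrow> profile_numer c t < 0"
proof -
  have slope_r: "4*c * cos r < pi + 2*r"
  proof (rule ccontr)
    assume "\<not> ?thesis"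
    then have "profile_numer c 0 \<le> profile_numer c r" using assms by (intro profile_numer_mono) auto
    then show False using assms by simp
  qed
  show "0 < profile_numer c t" if "0 \<le> t" "t < r"
  proof (cases "pi + 2*t \<le> 4*c * cos t")
    case True
    then have "profile_numer c 0 \<le> profile_numer c t" using assms that by (intro profile_numer_mono) auto
    then show ?thesis using assms by simp
  next
    case False
    then have "profile_numer c r < profile_numer c t"
      using assms that by (intro profile_numer_strict_antimono) auto
    then show ?thesis using assms by simp
  qed
  show "profile_numer c t < 0" if "r < t" "t < pi/2"
    using profile_numer_strict_antimono[of c r t] assms that slope_r by simp
qed

lemma profile_numer_root_unique:
  assumes "0 \<le> c" "0 < profile_numer c 0"
    and "0 < r" "r < pi/2" "profile_numer c r = 0"
    and "0 < s" "s < pi/2" "profile_numer c s = 0"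
  shows "r = s"
  using profile_numer_pos_before_root[OF assms(1-5), of s] profile_numer_neg_after_root[OF assms(1-5), of s]
    assms by (cases r s rule: linorder_cases) auto

lemma profile_numer_root_exists:
  assumes "0 \<le> c" "c < 1" "0 < profile_numer c 0"
  obtains r where "0 < r" "r < pi/2" "profile_numer c r = 0"
proof -
  have end_neg: "profile_numer c (pi/2) < 0"
    using assms by (simp add: profile_numer_def mult_neg_pos)
  have "\<forall>x. 0 \<le> x \<and> x \<le> pi/2 \<longrightarrow> isCont (profile_numer c) x"
    using profile_numer_has_derivative DERIV_isCont by blast
  then obtain r where "0 \<le> r" "r \<le> pi/2" "profile_numer c r = 0"
    using IVT2[of "profile_numer c" "pi/2" 0 0] end_neg assms by auto
  moreover have "r \<noteq> 0" "r \<noteq> pi/2" using calculation assms end_neg by force+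
  ultimately show ?thesis using that by (simp add: less_le)
qed

lemma profile_le_zero:
  assumes "0 \<le> c" "c \<le> 2/pi" "0 \<le> t" "t < pi/2"
  shows "profile c t \<le> 0"
proof -
  have "c < 1" using assms two_div_pi_bounds by linarith
  moreover have "profile_numer c s \<le> 0" if "0 \<le> s" "s < pi/2" for s
  proof (cases "s = 0")
    case True
    then show ?thesis using assms by (simp add: profile_numer_def field_simps)
  next
    case False
    then show ?thesis using profile_numer_neg[of c s] assms that by simp
  qed
  ultimately have "profile c t \<le> profile c 0"
    using assms by (intro profile_antimono) auto
  then show ?thesis by (simp add: profile_def)
qed

lemma profile_le_at_root:
  assumes "0 \<le> c" "c < 1" "0 < profile_numer c 0" "0 < r" "r < pi/2" "profile_numer c r = 0"
    and "0 \<le> t" "t < pi/2"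
  shows "profile c t \<le> profile c r"
proof (cases "t \<le> r")
  case True
  have "0 \<le> profile_numer c s" if "t \<le> s" "s \<le> r" for s
    using profile_numer_pos_before_root[OF assms(1,3-6), of s] assms that
    by (cases "s = r") auto
  then show ?thesis using True assms by (intro profile_mono) auto
next
  case False
  have "profile_numer c s \<le> 0" if "r \<le> s" "s \<le> t" for s
    using profile_numer_neg_after_root[OF assms(1,3-6), of s] assms that
    by (cases "s = r") auto
  then show ?thesis using False assms by (intro profile_antimono) auto
qed

lemma SUP_profile_subcritical:
  assumes "0 \<le> c" "c \<le> 2/pi"
  shows "(SUP t\<in>{0<..<pi/2}. profile c t) = 0"
proof -
  have le0: "profile c t \<le> 0" if "t \<in> {0<..<pi/2}" for t
    using profile_le_zero assms that by simp
  have "c < 1" using assms two_div_pi_bounds by linarith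
  then have "isCont (profile c) 0"
    using profile_has_derivative[of c 0] by (intro DERIV_isCont) auto
  then have "(profile c \<longlongrightarrow> 0) (at_right 0)"
    by (simp add: isCont_def filterlim_at_split profile_def)
  moreover have "\<forall>\<^sub>F t in at_right 0. profile c t \<le> (SUP t\<in>{0<..<pi/2}. profile c t)"
    unfolding eventually_at_right[OF pi_half_gt_zero]
    using bdd_aboveI2[of "{0<..<pi/2}" "profile c" 0, OF le0]
    by (intro exI[of _ "pi/2"]) (auto intro!: cSUP_upper)
  ultimately have "0 \<le> (SUP t\<in>{0<..<pi/2}. profile c t)"
    by (rule tendsto_upperbound) simp
  moreover have "(SUP t\<in>{0<..<pi/2}. profile c t) \<le> 0"
    using le0 by (intro cSUP_least) (auto simp: not_le)
  ultimately show ?thesis by simp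
qed

lemma SUP_profile_supercritical:
  assumes "0 \<le> c" "c < 1" "0 < profile_numer c 0" "0 < r" "r < pi/2" "profile_numer c r = 0"
  shows "(SUP t\<in>{0<..<pi/2}. profile c t) = profile c r"
proof (rule cSup_eq_maximum)
  show "profile c r \<in> profile c ` {0<..<pi/2}" using assms by simp
  show "s \<le> profile c r" if "s \<in> profile c ` {0<..<pi/2}" for s
    using that profile_le_at_root[OF assms] by auto
qed

section \<open>The transform as a supremum of the profile\<close>

lemma Lambda_polar:
  fixes p t l1 l2 l3 :: real
  assumes "0 < p" "- (pi/2) < t" "t < pi/2" "(1 - 2*l2) * (1 - 2*l3) = p\<^sup>2" "l1 = p * sin t"
  shows Dlam_polar: "Dlam l1 l2 l3 = - (p * cos t)\<^sup>2"
    and "Lambda l1 l2 l3 = ln (pi + 2*t) - ln pi - ln p - ln (cos t)"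
proof -
  have cos: "0 < cos t" using assms by (intro cos_gt_zero_pi) auto
  have "Dlam l1 l2 l3 = p\<^sup>2 * ((sin t)\<^sup>2 - 1)"
    using assms by (simp add: Dlam_def power_mult_distrib algebra_simps)
  then show D: "Dlam l1 l2 l3 = - (p * cos t)\<^sup>2"
    by (simp add: sin_squared_eq power_mult_distrib)
  have sqrt: "sqrt (- Dlam l1 l2 l3) = p * cos t" using D assms cos by simp
  have "arctan (l1 / sqrt (- Dlam l1 l2 l3)) = t"
    using sqrt assms cos arctan_tan[of t] by (simp add: tan_def)
  moreover have "ln (- Dlam l1 l2 l3) = 2 * (ln p + ln (cos t))"
    using D assms cos by (simp add: ln_realpow ln_mult)
  ultimately show "Lambda l1 l2 l3 = ln (pi + 2*t) - ln pi - ln p - ln (cos t)"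
    by (simp add: Lambda_def field_simps)
qed

lemma S_dom_polar:
  assumes "(l1, l2, l3) \<in> S_dom" "0 < l1"
  obtains p t where "0 < p" "0 < t" "t < pi/2" "(1 - 2*l2) * (1 - 2*l3) = p\<^sup>2" "l1 = p * sin t"
proof -
  define p where "p = sqrt ((1 - 2*l2) * (1 - 2*l3))"
  have ab: "0 < (1 - 2*l2) * (1 - 2*l3)" "l1\<^sup>2 < (1 - 2*l2) * (1 - 2*l3)"
    using assms by (auto simp: S_dom_def Dlam_def)
  then have p: "0 < p" "p\<^sup>2 = (1 - 2*l2) * (1 - 2*l3)" by (simp_all add: p_def)
  have "l1 < p" using ab assms by (simp add: p_def real_less_rsqrt)
  then have q: "0 < l1 / p" "l1 / p < 1" using p assms by simp_all
  define t where "t = arcsin (l1 / p)"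
  have "0 < t" using arcsin_less_arcsin[of 0 "l1 / p"] q by (simp add: t_def)
  moreover have "t < pi/2" using arcsin_lt_bounded[of "l1 / p"] q by (simp add: t_def)
  moreover have "l1 = p * sin t" using q p by (simp add: t_def)
  ultimately show ?thesis using that p by simp
qed

lemma objective_le_profile:
  fixes x y c :: real
  assumes "0 < x" "0 < y" "c < 1" "(l1, l2, l3) \<in> S_dom" "0 < l1"
  shows "\<exists>t\<in>{0<..<pi/2}. l1 * (x*y*c) + l2 * x\<^sup>2 + l3 * y\<^sup>2 - Lambda l1 l2 l3
           \<le> x\<^sup>2/2 + y\<^sup>2/2 - 1 - ln (x*y) + profile c t"
proof -
  obtain p t where p: "0 < p" and t: "0 < t" "t < pi/2"
    and ab: "(1 - 2*l2) * (1 - 2*l3) = p\<^sup>2" and l1: "l1 = p * sin t"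
    using S_dom_polar[OF assms(4,5)] .
  define q where "q = p*x*y"
  define w where "w = 1 - c * sin t"
  have q: "0 < q" using p assms by (simp add: q_def)
  have w: "0 < w" unfolding w_def using assms t by (intro one_minus_mult_sin_pos) auto
  have a: "0 < 1 - 2*l2" "0 < 1 - 2*l3" using assms by (auto simp: S_dom_def)
  have amgm: "2*q \<le> (1 - 2*l2) * x\<^sup>2 + (1 - 2*l3) * y\<^sup>2"
  proof -
    have "sqrt (1 - 2*l2) * sqrt (1 - 2*l3) = p"
      using ab p by (simp flip: real_sqrt_mult)
    then have "(1 - 2*l2) * x\<^sup>2 + (1 - 2*l3) * y\<^sup>2 - 2*q
        = (sqrt (1 - 2*l2) * x - sqrt (1 - 2*l3) * y)\<^sup>2"
      using a by (simp add: power2_eq_square algebra_simps q_def)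
    then show ?thesis by (metis diff_ge_0_iff_ge zero_le_power2)
  qed
  have "ln q + ln w \<le> q*w - 1" using ln_le_minus_one[of "q*w"] q w by (simp add: ln_mult)
  then have "ln q + ln w \<le> q - q * c * sin t - 1" by (simp add: w_def algebra_simps)
  moreover have "ln p = ln q - ln (x*y)" using p assms by (simp add: q_def ln_mult)
  moreover have "l1 * (x*y*c) + l2 * x\<^sup>2 + l3 * y\<^sup>2
      = q * c * sin t + x\<^sup>2/2 + y\<^sup>2/2 - ((1 - 2*l2) * x\<^sup>2 + (1 - 2*l3) * y\<^sup>2)/2"
    by (simp add: l1 q_def field_simps)
  moreover have "Lambda l1 l2 l3 = ln (pi + 2*t) - ln pi - ln p - ln (cos t)"
    using Lambda_polar(2)[OF p _ t(2) ab l1] t by simp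
  moreover have "profile c t = ln pi + ln (cos t) - ln (pi + 2*t) - ln w"
    by (simp add: profile_def w_def)
  ultimately have "l1 * (x*y*c) + l2 * x\<^sup>2 + l3 * y\<^sup>2 - Lambda l1 l2 l3
      \<le> x\<^sup>2/2 + y\<^sup>2/2 - 1 - ln (x*y) + profile c t"
    using amgm by argo
  then show ?thesis using t by auto
qed

lemma objective_attains_profile:
  fixes x y c t :: real
  assumes "0 < x" "0 < y" "c < 1" "0 < t" "t < pi/2"
  shows "\<exists>l1 l2 l3. (l1, l2, l3) \<in> S_dom \<and> 0 < l1 \<and>
           l1 * (x*y*c) + l2 * x\<^sup>2 + l3 * y\<^sup>2 - Lambda l1 l2 l3
           = x\<^sup>2/2 + y\<^sup>2/2 - 1 - ln (x*y) + profile c t"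
proof -
  define w where "w = 1 - c * sin t"
  have w: "0 < w" unfolding w_def using assms by (intro one_minus_mult_sin_pos) auto
  \<comment> \<open>equality in both estimates of \<open>objective_le_profile\<close>: \<open>a x\<^sup>2 = b y\<^sup>2 = p x y = 1 / w\<close>\<close>
  define p where "p = 1 / (w*x*y)"
  have p: "0 < p" using w assms by (simp add: p_def)
  define l1 where "l1 = p * sin t"
  define l2 where "l2 = (1 - p*y/x) / 2"
  define l3 where "l3 = (1 - p*x/y) / 2"
  have ab: "(1 - 2*l2) * (1 - 2*l3) = p\<^sup>2"
    using assms by (simp add: l2_def l3_def power2_eq_square field_simps)
  have "0 < sin t" "0 < cos t" using assms by (auto intro: sin_gt_zero cos_gt_zero_pi)
  then have "(l1, l2, l3) \<in> S_dom" "0 < l1"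
    using Dlam_polar[OF p _ assms(5) ab l1_def] p assms
    by (auto simp: S_dom_def l1_def l2_def l3_def)
  moreover have "l1 * (x*y*c) + l2 * x\<^sup>2 + l3 * y\<^sup>2
      = x\<^sup>2/2 + y\<^sup>2/2 - (p*x*y - p*x*y*c * sin t)"
    using assms by (simp add: l1_def l2_def l3_def power2_eq_square field_simps)
  moreover have "p*x*y - p*x*y*c * sin t = 1"
  proof -
    have "p*x*y * w = 1" using w assms by (simp add: p_def)
    then show ?thesis unfolding w_def by argo
  qed
  moreover have "ln p = - ln w - ln (x*y)"
    using w assms by (simp add: p_def ln_div ln_mult mult.assoc)
  moreover have "Lambda l1 l2 l3 = ln (pi + 2*t) - ln pi - ln p - ln (cos t)"
    using Lambda_polar(2)[OF p _ assms(5) ab l1_def] assms by simp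
  moreover have "profile c t = ln pi + ln (cos t) - ln (pi + 2*t) - ln w"
    by (simp add: profile_def w_def)
  ultimately have "l1 * (x*y*c) + l2 * x\<^sup>2 + l3 * y\<^sup>2 - Lambda l1 l2 l3
      = x\<^sup>2/2 + y\<^sup>2/2 - 1 - ln (x*y) + profile c t"
    by argo
  with \<open>(l1, l2, l3) \<in> S_dom\<close> \<open>0 < l1\<close> show ?thesis by blast
qed

lemma Lambda_star_plus_eq_SUP_profile:
  fixes x y c :: real
  assumes "0 < x" "0 < y" "c < 1" and bdd: "bdd_above (profile c ` {0<..<pi/2})"
  shows "Lambda_star_plus (x*y*c, x\<^sup>2, y\<^sup>2)
           = x\<^sup>2/2 + y\<^sup>2/2 - 1 - ln (x*y) + (SUP t\<in>{0<..<pi/2}. profile c t)"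
proof -
  define K where "K = x\<^sup>2/2 + y\<^sup>2/2 - 1 - ln (x*y)"
  define A where "A = {l \<in> S_dom. 0 < fst l}"
  define f where "f = (\<lambda>(l1, l2, l3). l1 * (x*y*c) + l2 * x\<^sup>2 + l3 * y\<^sup>2 - Lambda l1 l2 l3)"
  have L: "Lambda_star_plus (x*y*c, x\<^sup>2, y\<^sup>2) = (SUP l\<in>A. f l)"
    by (simp add: Lambda_star_plus_def A_def f_def case_prod_beta)
  have f_le: "f l \<le> K + (SUP t\<in>{0<..<pi/2}. profile c t)" if l: "l \<in> A" for l
  proof -
    obtain t where "t \<in> {0<..<pi/2}" "f l \<le> K + profile c t"
      using objective_le_profile[OF assms(1-3), of "fst l" "fst (snd l)" "snd (snd l)"] l
      by (auto simp: A_def f_def K_def case_prod_beta)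
    then show ?thesis using cSUP_upper[OF _ bdd] by fastforce
  qed
  have profile_in: "K + profile c t \<in> f ` A" if "t \<in> {0<..<pi/2}" for t
    using objective_attains_profile[OF assms(1-3)] that
    by (fastforce simp: A_def f_def K_def image_iff)
  have "A \<noteq> {}" using profile_in[of "pi/4"] by auto
  then have "(SUP l\<in>A. f l) \<le> K + (SUP t\<in>{0<..<pi/2}. profile c t)"
    using f_le by (rule cSUP_least)
  moreover have "(SUP t\<in>{0<..<pi/2}. profile c t) \<le> (SUP l\<in>A. f l) - K"
  proof (rule cSUP_least)
    show "{0<..<pi/2} \<noteq> {}" using pi_gt_zero by (auto simp: not_le)
    have "bdd_above (f ` A)" using f_le by (intro bdd_aboveI2)
    then have "K + profile c t \<le> (SUP l\<in>A. f l)" if "t \<in> {0<..<pi/2}" for t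
      using profile_in[OF that] by (auto intro: cSUP_upper)
    then show "profile c t \<le> (SUP l\<in>A. f l) - K" if "t \<in> {0<..<pi/2}" for t
      using that by fastforce
  qed
  ultimately show ?thesis unfolding L K_def by linarith
qed

section \<open>The equation for \<open>\<beta>\<^sub>0\<close>\<close>

lemma arcsin_inverse_bounds:
  fixes b :: real
  assumes "1 < b"
  shows "0 < arcsin (1/b)" "arcsin (1/b) < pi/2"
proof -
  have b: "0 < 1/b" "1/b < 1" using assms by simp_all
  then show "0 < arcsin (1/b)" using arcsin_less_arcsin[of 0 "1/b"] by simp
  show "arcsin (1/b) < pi/2" using arcsin_lt_bounded[of "1/b"] b by linarith
qed

lemma cos_arcsin_inverse:
  fixes b :: real
  assumes "1 < b"
  shows "cos (arcsin (1/b)) = sqrt (b\<^sup>2 - 1) / b"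
proof -
  have "0 < 1/b" "1/b < 1" using assms by simp_all
  then have "cos (arcsin (1/b)) = sqrt (1 - (1/b)\<^sup>2)" by (intro cos_arcsin) linarith+
  also have "1 - (1/b)\<^sup>2 = (b\<^sup>2 - 1) / b\<^sup>2" using assms by (simp add: field_simps)
  finally show ?thesis using assms by (simp add: real_sqrt_divide)
qed

lemma arccos_minus_inverse:
  fixes b :: real
  assumes "1 < b"
  shows "arccos (-1/b) = pi/2 + arcsin (1/b)"
proof -
  have "0 < 1/b" "1/b < 1" using assms by simp_all
  then have "arccos (- (1/b)) = pi - arccos (1/b)" "arcsin (1/b) = pi/2 - arccos (1/b)"
    using arccos_minus[of "1/b"] arcsin_arccos_eq[of "1/b"] by linarith+
  then show ?thesis by simp
qed

text \<open>With \<open>c = cos \<theta>\<close>, \<open>critical_point c b\<close> is the defining condition of \<open>\<beta>\<^sub>0\<close>; substituting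
  \<open>b = 1 / sin t\<close> turns it into \<open>profile_numer c t = 0\<close>.\<close>

definition critical_point :: "real \<Rightarrow> real \<Rightarrow> bool" where
  "critical_point c b \<longleftrightarrow> 1 < b \<and> arccos (-1/b) = (b - c) * sqrt (b\<^sup>2 - 1) / (b * (b * c - 1))"

lemma profile_numer_arcsin_inverse:
  fixes b c :: real
  assumes "1 < b"
  defines "t \<equiv> arcsin (1/b)"
  shows "b * profile_numer c t = (b*c - 1) * (pi + 2*t) - 2 * cos t * (b - c)"
  using assms by (simp add: profile_numer_def t_def field_simps)

lemma critical_point_iff:
  fixes b c :: real
  assumes "c < 1"
  shows "critical_point c b \<longleftrightarrow> 1 < b \<and> profile_numer c (arcsin (1/b)) = 0"
proof (cases "1 < b")
  case True
  define t where "t = arcsin (1/b)"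
  have t: "0 < t" "t < pi/2" using arcsin_inverse_bounds[OF True] by (simp_all add: t_def)
  have cos: "0 < cos t" using t by (intro cos_gt_zero_pi) auto
  have sqrt: "sqrt (b\<^sup>2 - 1) = b * cos t" using cos_arcsin_inverse[OF True] True by (simp add: t_def)
  have N: "b * profile_numer c t = (b*c - 1) * (pi + 2*t) - 2 * cos t * (b - c)"
    using profile_numer_arcsin_inverse[OF True] by (simp add: t_def)
  have "arccos (-1/b) = (b - c) * sqrt (b\<^sup>2 - 1) / (b * (b * c - 1)) \<longleftrightarrow> profile_numer c t = 0"
  proof (cases "b * c = 1")
    case True
    then show ?thesis
      using N cos \<open>1 < b\<close> assms t arccos_minus_inverse[of b] by (auto simp: t_def)
  next
    case False
    have "(b - c) * sqrt (b\<^sup>2 - 1) / (b * (b * c - 1)) = (b - c) * cos t / (b*c - 1)"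
      using sqrt \<open>1 < b\<close> by simp
    then have "arccos (-1/b) = (b - c) * sqrt (b\<^sup>2 - 1) / (b * (b * c - 1))
        \<longleftrightarrow> pi/2 + t = (b - c) * cos t / (b*c - 1)"
      unfolding arccos_minus_inverse[OF True] t_def by argo
    also have "\<dots> \<longleftrightarrow> (pi/2 + t) * (b*c - 1) = (b - c) * cos t"
      using False by (simp add: eq_divide_eq)
    also have "\<dots> \<longleftrightarrow> b * profile_numer c t = 0" unfolding N by argo
    finally show ?thesis using True by simp
  qed
  then show ?thesis using True by (simp add: critical_point_def t_def)
qed (simp add: critical_point_def)

lemma profile_at_critical:
  fixes b c :: real
  assumes "1 < b" "c < 1" "profile_numer c (arcsin (1/b)) = 0"
  shows "profile c (arcsin (1/b)) = ln (pi * b * (b*c - 1) / (2 * (b - c)\<^sup>2))"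
proof -
  define t where "t = arcsin (1/b)"
  have t: "0 < t" "t < pi/2" using arcsin_inverse_bounds[OF assms(1)] by (simp_all add: t_def)
  have cos: "0 < cos t" using t by (intro cos_gt_zero_pi) auto
  have crit: "(b*c - 1) * (pi + 2*t) = 2 * cos t * (b - c)"
    using profile_numer_arcsin_inverse[OF assms(1), of c] assms by (simp add: t_def)
  have "0 < (b*c - 1) * (pi + 2*t)" using crit cos assms by simp
  then have "0 < b*c - 1" using t pi_gt_zero by (simp add: zero_less_mult_iff)
  then have "pi + 2*t = 2 * cos t * (b - c) / (b*c - 1)" using crit by (simp add: field_simps)
  moreover have "1 - c * sin t = (b - c) / b" using assms by (simp add: t_def field_simps)
  ultimately have "pi * cos t / ((pi + 2*t) * (1 - c * sin t))
      = pi * cos t / (2 * cos t * (b - c) / (b*c - 1) * ((b - c) / b))"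
    by simp
  also have "\<dots> = pi * b * (b*c - 1) / (2 * (b - c)\<^sup>2)"
  proof -
    \<comment> \<open>stated for atoms \<open>d\<close>, \<open>e\<close> so that \<open>field_simps\<close> can cancel \<open>d\<^sup>2\<close>\<close>
    have frac: "pi * k / (2 * k * d / e * (d / b)) = pi * b * e / (2 * d\<^sup>2)"
      if "k \<noteq> 0" "d \<noteq> 0" "e \<noteq> 0" for k d e :: real
      using that assms by (simp add: field_simps power2_eq_square)
    show ?thesis using cos assms \<open>0 < b*c - 1\<close> by (intro frac) auto
  qed
  finally show ?thesis using profile_eq_ln[OF assms(2)] t by (simp add: t_def)
qed

lemma critical_point_ex1:
  assumes "2/pi < c" "c < 1"
  shows "\<exists>!b. critical_point c b"
proof -
  have c: "0 \<le> c" using assms two_div_pi_bounds by linarith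
  have N0: "0 < profile_numer c 0" using assms pi_gt_zero by (simp add: profile_numer_def field_simps)
  obtain r where r: "0 < r" "r < pi/2" "profile_numer c r = 0"
    using profile_numer_root_exists[OF c assms(2) N0] .
  have "0 < sin r" using r by (intro sin_gt_zero) auto
  moreover have "sin r < 1" using r sin_monotone_2pi[of r "pi/2"] by simp
  ultimately have b_r: "1 < 1 / sin r" by simp
  have "arcsin (1 / (1 / sin r)) = r" using r by (simp add: arcsin_sin)
  show ?thesis
  proof (rule ex1I)
    show "critical_point c (1 / sin r)"
      using b_r \<open>arcsin (1 / (1 / sin r)) = r\<close> r assms by (simp add: critical_point_iff)
    show "b = 1 / sin r" if "critical_point c b" for b
    proof -
      have b: "1 < b" "profile_numer c (arcsin (1/b)) = 0"
        using that assms by (simp_all add: critical_point_iff)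
      then have "arcsin (1/b) = r"
        using profile_numer_root_unique[OF c N0 _ _ _ r] arcsin_inverse_bounds[OF b(1)] by blast
      moreover have "-1 \<le> 1/b" "1/b \<le> 1" using b(1) by (simp_all add: order.trans[of _ 0])
      ultimately have "sin r = 1/b" by auto
      then show ?thesis by simp
    qed
  qed
qed

lemma Lambda_star_plus_subcritical:
  fixes x y c :: real
  assumes "0 < x" "0 < y" "0 \<le> c" "c \<le> 2/pi"
  shows "Lambda_star_plus (x*y*c, x\<^sup>2, y\<^sup>2) = x\<^sup>2/2 + y\<^sup>2/2 - 1 - ln (x*y)"
proof -
  have "c < 1" using assms two_div_pi_bounds by linarith
  moreover have "bdd_above (profile c ` {0<..<pi/2})"
    using profile_le_zero assms by (intro bdd_aboveI2[where M = 0]) auto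
  ultimately show ?thesis
    using Lambda_star_plus_eq_SUP_profile[OF assms(1,2)] SUP_profile_subcritical[OF assms(3,4)] by simp
qed

lemma Lambda_star_plus_supercritical:
  fixes x y c b :: real
  assumes "0 < x" "0 < y" "2/pi < c" "c < 1" "critical_point c b"
  shows "Lambda_star_plus (x*y*c, x\<^sup>2, y\<^sup>2)
           = x\<^sup>2/2 + y\<^sup>2/2 - 1 - ln (x*y) + ln (pi * b * (b*c - 1) / (2 * (b - c)\<^sup>2))"
proof -
  have c: "0 \<le> c" using assms two_div_pi_bounds by linarith
  have N0: "0 < profile_numer c 0" using assms pi_gt_zero by (simp add: profile_numer_def field_simps)
  have b: "1 < b" "profile_numer c (arcsin (1/b)) = 0" using assms by (simp_all add: critical_point_iff)
  note root = arcsin_inverse_bounds[OF b(1)] b(2)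
  have "bdd_above (profile c ` {0<..<pi/2})"
    using profile_le_at_root[OF c assms(4) N0 root]
    by (intro bdd_aboveI2[where M = "profile c (arcsin (1/b))"]) auto
  then show ?thesis
    using Lambda_star_plus_eq_SUP_profile[OF assms(1,2,4)] SUP_profile_supercritical[OF c assms(4) N0 root]
      profile_at_critical[OF b(1) assms(4) b(2)] by simp
qed

theorem lemma9:
  fixes x y \<theta> :: real
  assumes "x > 0" and "y > 0" and "0 < \<theta>" and "\<theta> < pi/2"
  defines "z \<equiv> (x * y * cos \<theta>, x^2, y^2)"
  shows "(\<theta> < arccos (2/pi) \<longrightarrow>
           (\<exists>!b0::real. b0 > 1 \<and>
              arccos (-1/b0) = (b0 - cos \<theta>) * sqrt (b0^2 - 1) / (b0 * (b0 * cos \<theta> - 1)))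
         \<and> (\<forall>b0::real. b0 > 1 \<and>
              arccos (-1/b0) = (b0 - cos \<theta>) * sqrt (b0^2 - 1) / (b0 * (b0 * cos \<theta> - 1))
              \<longrightarrow> Lambda_star_plus z = x^2/2 + y^2/2 - 1 - ln (x*y)
                    + ln (pi * b0 * (b0 * cos \<theta> - 1) / (2 * (b0 - cos \<theta>)^2))))
       \<and> (arccos (2/pi) \<le> \<theta> \<longrightarrow> Lambda_star_plus z = x^2/2 + y^2/2 - 1 - ln (x*y))"
proof -
  have c: "0 < cos \<theta>" "cos \<theta> < 1"
    using assms cos_monotone_0_pi[of 0 \<theta>] by (auto intro: cos_gt_zero_pi)
  have "0 \<le> arccos (2/pi)" "arccos (2/pi) \<le> pi" "cos (arccos (2/pi)) = 2/pi"
    using arccos_bounded[of "2/pi"] cos_arccos[of "2/pi"] two_div_pi_bounds by linarith+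
  then have "\<theta> < arccos (2/pi) \<longleftrightarrow> 2/pi < cos \<theta>"
    using assms cos_mono_less_eq[of "arccos (2/pi)" \<theta>] by simp
  then show ?thesis
    using Lambda_star_plus_supercritical[OF assms(1,2) _ c(2)] critical_point_ex1[OF _ c(2)]
      Lambda_star_plus_subcritical[OF assms(1,2) less_imp_le[OF c(1)]]
    unfolding z_def critical_point_def by (auto simp: not_less)
qed

end
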